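(* For any set of rule schemes $\mathcal{R}\subseteq\{N,H,P,F,wF\}$, if a sequent $\Gamma\Rightarrow A$ is valid in every $\mathbf{K}(\mathcal{R})$-Kripke model, then $i\mathbf{STL}(\mathcal{R})\vdash\Gamma\Rightarrow A$.
   Context: Formulas of $\mathcal{L}_\nabla$ are built from variables and constants $1,\top,\bot$ by $\wedge,\vee,\otimes,\to$ and unary $\nabla$. Sequents $\Gamma\Rightarrow A$ have $\Gamma$ a finite sequence; $\nabla\Gamma$ applies $\nabla$ to each member. $\mathbf{STL}$ has axioms $A\Rightarrow A$, $\Rightarrow1$, $\nabla1\Rightarrow1$, $\Gamma\Rightarrow\top$, $\Gamma,\bot,\Sigma\Rightarrow A$ and rules (premises / conclusion): cut: $\Gamma\Rightarrow A$, $\Pi,A,\Sigma\Rightarrow B$ / $\Pi,\Gamma,\Sigma\Rightarrow B$; $L\wedge$: $\Gamma,A,\Sigma\Rightarrow C$ / $\Gamma,A\wedge B,\Sigma\Rightarrow C$ and $\Gamma,B,\Sigma\Rightarrow C$ / $\Gamma,A\wedge B,\Sigma\Rightarrow C$; $R\wedge$: $\Gamma\Rightarrow A$, $\Gamma\Rightarrow B$ / $\Gamma\Rightarrow A\wedge B$; $L\vee$: $\Gamma,A,\Sigma\Rightarrow C$, $\Gamma,B,\Sigma\Rightarrow C$ / $\Gamma,A\vee B,\Sigma\Rightarrow C$; $R\vee$: $\Gamma\Rightarrow A$ / $\Gamma\Rightarrow A\vee B$ and $\Gamma\Rightarrow B$ / $\Gamma\Rightarrow A\vee B$; $L1$: $\Gamma,\Sigma\Rightarrow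 A$ / $\Gamma,1,\Sigma\Rightarrow A$; $L\otimes$: $\Gamma,A,B,\Sigma\Rightarrow C$ / $\Gamma,A\otimes B,\Sigma\Rightarrow C$; $R\otimes$: $\Gamma\Rightarrow A$, $\Sigma\Rightarrow B$ / $\Gamma,\Sigma\Rightarrow A\otimes B$; $(\nabla)$: $A\Rightarrow B$ / $\nabla A\Rightarrow\nabla B$; Oplax: $\nabla A,\nabla B\Rightarrow C$ / $\nabla(A\otimes B)\Rightarrow C$; $L\to$: $\Gamma\Rightarrow A$, $\Pi,B,\Sigma\Rightarrow C$ / $\Pi,\Gamma,\nabla(A\to B),\Sigma\Rightarrow C$; $R\to$: $A,\nabla\Gamma\Rightarrow B$ / $\Gamma\Rightarrow A\to B$. Schemes: $(N)$: $\Gamma\Rightarrow A$ / $\nabla\Gamma\Rightarrow\nabla A$; $(P)$: $\Gamma\Rightarrow\nabla A$ / $\Gamma\Rightarrow A$; $(F)$: $\Gamma\Rightarrow A$ / $\Gamma\Rightarrow\nabla A$; $(wF)$: $\nabla A\Rightarrow\bot$ / $A\Rightarrow\bot$; $(H)$: $\Gamma,A_1\to B_1,\dots,A_n\to B_n\Rightarrow C$ / $\nabla\Gamma,\nabla A_1\to\nabla B_1,\dots,\nabla A_n\to\nabla B_n\Rightarrow\nabla C$. $i\mathbf{STL}(\mathcal{R})$ is $\mathbf{STL}$ plus the schemes in $\mathcal{R}$ plus left weakening, contraction and exchange. A Kripke model is $(W,\le,R,V)$: $(W,\le)$ a poset, $R\subseteq W\times W$ with $(u,v)\in R$, $u'\le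 u$, $v\le v'$ implying $(u',v')\in R$, and $V$ assigning an upset to each variable. Forcing: $w\Vdash p$ iff $w\in V(p)$; $\top$, $1$ always forced; $\bot$ never; $\wedge$ and $\otimes$ both as conjunction; $\vee$ as disjunction; $w\Vdash A\to B$ iff for all $v$ with $(w,v)\in R$, $v\Vdash A$ implies $v\Vdash B$; $w\Vdash\nabla A$ iff there is $v$ with $(v,w)\in R$ and $v\Vdash A$. $\Gamma\Rightarrow A$ is valid if every $w$ forcing all of $\Gamma$ forces $A$. A $\mathbf{K}(\mathcal{R})$-Kripke model satisfies: for $(N)$, there is an order-preserving $\pi:W\to W$ with $(u,v)\in R$ iff $u\le\pi(v)$; for $(H)$, such $\pi$ exists and is an order isomorphism; for $(P)$, $R\subseteq\le$; for $(F)$, $R$ reflexive; for $(wF)$, $R$ serial; for each scheme in $\mathcal{R}$. *)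

theory Defs
  imports Main
begin

datatype 'a fm =
    Var 'a
  | One
  | Top
  | Bot
  | And "'a fm" "'a fm"
  | Or "'a fm" "'a fm"
  | Tens "'a fm" "'a fm"
  | Imp "'a fm" "'a fm"
  | Nab "'a fm"

datatype scheme = SN | SH | SP | SF | SwF

inductive deriv :: "scheme set \<Rightarrow> 'a fm list \<Rightarrow> 'a fm \<Rightarrow> bool" for Rs where
  ax_id: "deriv Rs [A] A"
| ax_one: "deriv Rs [] One"
| ax_nab_one: "deriv Rs [Nab One] One"
| ax_top: "deriv Rs \<Gamma> Top"
| ax_bot: "deriv Rs (\<Gamma> @ [Bot] @ \<Sigma>) A"
| cut: "deriv Rs \<Gamma> A \<Longrightarrow> deriv Rs (\<Pi> @ [A] @ \<Sigma>) B \<Longrightarrow> deriv Rs (\<Pi> @ \<Gamma> @ \<Sigma>) B"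
| L_and1: "deriv Rs (\<Gamma> @ [A] @ \<Sigma>) C \<Longrightarrow> deriv Rs (\<Gamma> @ [And A B] @ \<Sigma>) C"
| L_and2: "deriv Rs (\<Gamma> @ [B] @ \<Sigma>) C \<Longrightarrow> deriv Rs (\<Gamma> @ [And A B] @ \<Sigma>) C"
| R_and: "deriv Rs \<Gamma> A \<Longrightarrow> deriv Rs \<Gamma> B \<Longrightarrow> deriv Rs \<Gamma> (And A B)"
| L_or: "deriv Rs (\<Gamma> @ [A] @ \<Sigma>) C \<Longrightarrow> deriv Rs (\<Gamma> @ [B] @ \<Sigma>) C
         \<Longrightarrow> deriv Rs (\<Gamma> @ [Or A B] @ \<Sigma>) C"
| R_or1: "deriv Rs \<Gamma> A \<Longrightarrow> deriv Rs \<Gamma> (Or A B)"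
| R_or2: "deriv Rs \<Gamma> B \<Longrightarrow> deriv Rs \<Gamma> (Or A B)"
| L_one: "deriv Rs (\<Gamma> @ \<Sigma>) A \<Longrightarrow> deriv Rs (\<Gamma> @ [One] @ \<Sigma>) A"
| L_tens: "deriv Rs (\<Gamma> @ [A, B] @ \<Sigma>) C \<Longrightarrow> deriv Rs (\<Gamma> @ [Tens A B] @ \<Sigma>) C"
| R_tens: "deriv Rs \<Gamma> A \<Longrightarrow> deriv Rs \<Sigma> B \<Longrightarrow> deriv Rs (\<Gamma> @ \<Sigma>) (Tens A B)"
| nab: "deriv Rs [A] B \<Longrightarrow> deriv Rs [Nab A] (Nab B)"
| oplax: "deriv Rs [Nab A, Nab B] C \<Longrightarrow> deriv Rs [Nab (Tens A B)] C"
| L_imp: "deriv Rs \<Gamma> A \<Longrightarrow> deriv Rs (\<Pi> @ [B] @ \<Sigma>) C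
          \<Longrightarrow> deriv Rs (\<Pi> @ \<Gamma> @ [Nab (Imp A B)] @ \<Sigma>) C"
| R_imp: "deriv Rs (A # map Nab \<Gamma>) B \<Longrightarrow> deriv Rs \<Gamma> (Imp A B)"
| sch_N: "SN \<in> Rs \<Longrightarrow> deriv Rs \<Gamma> A \<Longrightarrow> deriv Rs (map Nab \<Gamma>) (Nab A)"
| sch_P: "SP \<in> Rs \<Longrightarrow> deriv Rs \<Gamma> (Nab A) \<Longrightarrow> deriv Rs \<Gamma> A"
| sch_F: "SF \<in> Rs \<Longrightarrow> deriv Rs \<Gamma> A \<Longrightarrow> deriv Rs \<Gamma> (Nab A)"
| sch_wF: "SwF \<in> Rs \<Longrightarrow> deriv Rs [Nab A] Bot \<Longrightarrow> deriv Rs [A] Bot"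
| sch_H: "SH \<in> Rs \<Longrightarrow> deriv Rs (\<Gamma> @ map (\<lambda>(a, b). Imp a b) ps) C
          \<Longrightarrow> deriv Rs (map Nab \<Gamma> @ map (\<lambda>(a, b). Imp (Nab a) (Nab b)) ps) (Nab C)"
| weak: "deriv Rs (\<Gamma> @ \<Sigma>) B \<Longrightarrow> deriv Rs (\<Gamma> @ [A] @ \<Sigma>) B"
| contr: "deriv Rs (\<Gamma> @ [A, A] @ \<Sigma>) B \<Longrightarrow> deriv Rs (\<Gamma> @ [A] @ \<Sigma>) B"
| exch: "deriv Rs (\<Gamma> @ [A, B] @ \<Sigma>) C \<Longrightarrow> deriv Rs (\<Gamma> @ [B, A] @ \<Sigma>) C"

definition kripke_model ::
  "'w set \<Rightarrow> ('w \<Rightarrow> 'w \<Rightarrow> bool) \<Rightarrow> ('w \<Rightarrow> 'w \<Rightarrow> bool) \<Rightarrow> ('a \<Rightarrow> 'w set) \<Rightarrow> bool" where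
  "kripke_model W le R V \<longleftrightarrow>
     (\<forall>u\<in>W. le u u) \<and>
     (\<forall>u\<in>W. \<forall>v\<in>W. le u v \<and> le v u \<longrightarrow> u = v) \<and>
     (\<forall>u\<in>W. \<forall>v\<in>W. \<forall>w\<in>W. le u v \<and> le v w \<longrightarrow> le u w) \<and>
     (\<forall>u\<in>W. \<forall>v\<in>W. \<forall>u'\<in>W. \<forall>v'\<in>W. R u v \<and> le u' u \<and> le v v' \<longrightarrow> R u' v') \<and>
     (\<forall>p. V p \<subseteq> W \<and> (\<forall>u\<in>V p. \<forall>v\<in>W. le u v \<longrightarrow> v \<in> V p))"

fun forces ::
  "'w set \<Rightarrow> ('w \<Rightarrow> 'w \<Rightarrow> bool) \<Rightarrow> ('w \<Rightarrow> 'w \<Rightarrow> bool) \<Rightarrow> ('a \<Rightarrow> 'w set) \<Rightarrow> 'w \<Rightarrow> 'a fm \<Rightarrow> bool" where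
  "forces W le R V w (Var p) = (w \<in> V p)"
| "forces W le R V w One = True"
| "forces W le R V w Top = True"
| "forces W le R V w Bot = False"
| "forces W le R V w (And A B) = (forces W le R V w A \<and> forces W le R V w B)"
| "forces W le R V w (Or A B) = (forces W le R V w A \<or> forces W le R V w B)"
| "forces W le R V w (Tens A B) = (forces W le R V w A \<and> forces W le R V w B)"
| "forces W le R V w (Imp A B) =
     (\<forall>v\<in>W. R w v \<longrightarrow> forces W le R V v A \<longrightarrow> forces W le R V v B)"
| "forces W le R V w (Nab A) = (\<exists>v\<in>W. R v w \<and> forces W le R V v A)"

definition valid_in ::
  "'w set \<Rightarrow> ('w \<Rightarrow> 'w \<Rightarrow> bool) \<Rightarrow> ('w \<Rightarrow> 'w \<Rightarrow> bool) \<Rightarrow> ('a \<Rightarrow> 'w set) \<Rightarrow> 'a fm list \<Rightarrow> 'a fm \<Rightarrow> bool" where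
  "valid_in W le R V \<Gamma> A \<longleftrightarrow>
     (\<forall>w\<in>W. (\<forall>B\<in>set \<Gamma>. forces W le R V w B) \<longrightarrow> forces W le R V w A)"

definition has_pi :: "'w set \<Rightarrow> ('w \<Rightarrow> 'w \<Rightarrow> bool) \<Rightarrow> ('w \<Rightarrow> 'w \<Rightarrow> bool) \<Rightarrow> ('w \<Rightarrow> 'w) \<Rightarrow> bool" where
  "has_pi W le R \<pi> \<longleftrightarrow>
     (\<forall>u\<in>W. \<pi> u \<in> W) \<and>
     (\<forall>u\<in>W. \<forall>v\<in>W. le u v \<longrightarrow> le (\<pi> u) (\<pi> v)) \<and>
     (\<forall>u\<in>W. \<forall>v\<in>W. R u v \<longleftrightarrow> le u (\<pi> v))"

definition K_model ::
  "scheme set \<Rightarrow> 'w set \<Rightarrow> ('w \<Rightarrow> 'w \<Rightarrow> bool) \<Rightarrow> ('w \<Rightarrow> 'w \<Rightarrow> bool) \<Rightarrow> ('a \<Rightarrow> 'w set) \<Rightarrow> bool" where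
  "K_model Rs W le R V \<longleftrightarrow>
     kripke_model W le R V \<and>
     (SN \<in> Rs \<longrightarrow> (\<exists>\<pi>. has_pi W le R \<pi>)) \<and>
     (SH \<in> Rs \<longrightarrow> (\<exists>\<pi>. has_pi W le R \<pi> \<and> bij_betw \<pi> W W \<and>
                        (\<forall>u\<in>W. \<forall>v\<in>W. le u v \<longleftrightarrow> le (\<pi> u) (\<pi> v)))) \<and>
     (SP \<in> Rs \<longrightarrow> (\<forall>u\<in>W. \<forall>v\<in>W. R u v \<longrightarrow> le u v)) \<and>
     (SF \<in> Rs \<longrightarrow> (\<forall>u\<in>W. R u u)) \<and>
     (SwF \<in> Rs \<longrightarrow> (\<forall>u\<in>W. \<exists>v\<in>W. R u v))"

end

theory Submission
  imports Defs
begin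

text \<open>A canonical model argument. The worlds are the prime theories of iSTL(R) (sets closed
  under derivability that omit \<bottom> and are prime for \<or>), ordered by inclusion, with S R T iff
  \<nabla>A \<in> T for all A \<in> S. If \<Gamma> \<Rightarrow> A is not derivable, a Zorn/Lindenbaum argument
  yields a prime theory containing \<Gamma> but not A, and the truth lemma (a prime theory forces
  exactly its members, the \<rightarrow> and \<nabla> cases again by Lindenbaum) makes it a countermodel.
  Each scheme gives its frame condition: (N) yields \<pi>(S) = {A | \<nabla>A \<in> S}; under (H),
  A and \<nabla>(1 \<rightarrow> A) are interderivable, which makes \<pi> an order embedding with inverse
  F \<mapsto> {A | 1 \<rightarrow> A \<in> F}; (P) and (F) give R \<subseteq> \<le> and reflexivity through \<nabla>A \<Rightarrow> A
  and A \<Rightarrow> \<nabla>A; and (wF), applied to the tensor of finitely many members of S, shows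
  that {\<nabla>A | A \<in> S} extends to a prime theory, i.e. seriality.\<close>

lemma deriv_weaken_list: "deriv Rs \<Sigma> C \<Longrightarrow> deriv Rs (\<Gamma> @ \<Sigma>) C"
proof (induction \<Gamma>)
  case (Cons A \<Gamma>)
  then show ?case using weak[of Rs "[]" "\<Gamma> @ \<Sigma>" C A] by simp
qed simp

lemma deriv_move_front: "deriv Rs (\<Gamma> @ \<Pi> @ [A] @ \<Sigma>) C \<Longrightarrow> deriv Rs (\<Gamma> @ A # \<Pi> @ \<Sigma>) C"
proof (induction \<Pi> arbitrary: \<Gamma>)
  case (Cons B \<Pi>)
  from Cons.IH[of "\<Gamma> @ [B]"] Cons.prems have "deriv Rs (\<Gamma> @ [B, A] @ \<Pi> @ \<Sigma>) C" by simp
  then show ?case using exch by fastforce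
qed simp

lemma deriv_move_back: "deriv Rs (\<Gamma> @ A # \<Pi> @ \<Sigma>) C \<Longrightarrow> deriv Rs (\<Gamma> @ \<Pi> @ [A] @ \<Sigma>) C"
proof (induction \<Pi> arbitrary: \<Gamma>)
  case (Cons B \<Pi>)
  from Cons.prems have "deriv Rs ((\<Gamma> @ [B]) @ A # \<Pi> @ \<Sigma>) C"
    using exch[of Rs \<Gamma> A B "\<Pi> @ \<Sigma>" C] by simp
  from Cons.IH[OF this] show ?case by simp
qed simp

lemma deriv_contract_member:
  assumes "A \<in> set \<Gamma>" and "deriv Rs (A # \<Gamma>) C"
  shows "deriv Rs \<Gamma> C"
proof -
  obtain \<Pi> \<Sigma> where \<Gamma>: "\<Gamma> = \<Pi> @ A # \<Sigma>" using assms(1) by (meson split_list)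
  have "deriv Rs ([A] @ A # \<Pi> @ \<Sigma>) C"
    using deriv_move_front[of Rs "[A]" \<Pi> A \<Sigma> C] assms(2) \<Gamma> by simp
  then have "deriv Rs ([] @ A # \<Pi> @ \<Sigma>) C" using contr[of Rs "[]" A "\<Pi> @ \<Sigma>" C] by simp
  then show ?thesis using deriv_move_back \<Gamma> by fastforce
qed

lemma deriv_absorb: "deriv Rs (\<Gamma> @ \<Sigma>) C \<Longrightarrow> set \<Sigma> \<subseteq> set \<Gamma> \<Longrightarrow> deriv Rs \<Gamma> C"
proof (induction \<Sigma>)
  case (Cons A \<Sigma>)
  then have "deriv Rs (A # \<Gamma> @ \<Sigma>) C" using deriv_move_front[of Rs "[]" \<Gamma> A \<Sigma> C] by simp
  with Cons show ?case using deriv_contract_member[of A "\<Gamma> @ \<Sigma>"] by auto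
qed simp

lemma deriv_mono: "deriv Rs \<Gamma> C \<Longrightarrow> set \<Gamma> \<subseteq> set \<Gamma>' \<Longrightarrow> deriv Rs \<Gamma>' C"
  using deriv_absorb deriv_weaken_list by blast

lemma deriv_cut_head: "deriv Rs \<Gamma> A \<Longrightarrow> deriv Rs (A # \<Sigma>) B \<Longrightarrow> deriv Rs (\<Gamma> @ \<Sigma>) B"
  using cut[of Rs \<Gamma> A "[]" \<Sigma> B] by simp

lemma deriv_trans: "deriv Rs [A] B \<Longrightarrow> deriv Rs [B] C \<Longrightarrow> deriv Rs [A] C"
  using deriv_cut_head[of Rs "[A]" B "[]" C] by simp

lemma deriv_cut_map:
  assumes "\<And>A. A \<in> set \<Gamma> \<Longrightarrow> deriv Rs [f A] A" and "deriv Rs \<Gamma> C"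
  shows "deriv Rs (map f \<Gamma>) C"
proof -
  have "deriv Rs (map f \<Pi> @ \<Sigma>) C \<Longrightarrow> set \<Sigma> \<subseteq> set \<Gamma> \<Longrightarrow> deriv Rs (map f (\<Pi> @ \<Sigma>)) C"
    for \<Pi> \<Sigma>
  proof (induction \<Sigma> arbitrary: \<Pi>)
    case (Cons A \<Sigma>)
    then have "deriv Rs (map f \<Pi> @ [f A] @ \<Sigma>) C"
      using cut[of Rs "[f A]" A "map f \<Pi>" \<Sigma> C] assms(1) by simp
    with Cons.IH[of "\<Pi> @ [A]"] Cons.prems show ?case by simp
  qed simp
  from this[of "[]" \<Gamma>] assms(2) show ?thesis by simp
qed

lemma deriv_Bot_left: "deriv Rs [Bot] C"
  using ax_bot[of Rs "[]" "[]" C] by simp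

lemma deriv_Or_left: "deriv Rs [A] C \<Longrightarrow> deriv Rs [B] C \<Longrightarrow> deriv Rs [Or A B] C"
  using L_or[of Rs "[]" A "[]" C B] by simp

lemma deriv_And_left1: "deriv Rs [And A B] A"
  using L_and1[of Rs "[]" A "[]" A B] ax_id by fastforce

lemma deriv_And_left2: "deriv Rs [And A B] B"
  using L_and2[of Rs "[]" B "[]" B A] ax_id by fastforce

lemma deriv_And_pair: "deriv Rs [A, B] (And A B)"
  by (intro R_and; rule deriv_mono[OF ax_id]) auto

lemma deriv_Tens_left1: "deriv Rs [Tens A B] A"
  using L_tens[of Rs "[]" A B "[]" A] deriv_mono[OF ax_id[of Rs A], of "[A, B]"] by simp

lemma deriv_Tens_left2: "deriv Rs [Tens A B] B"
  using L_tens[of Rs "[]" A B "[]" B] deriv_mono[OF ax_id[of Rs B], of "[A, B]"] by simp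

lemma deriv_Tens_pair: "deriv Rs [A, B] (Tens A B)"
  using R_tens[OF ax_id[of Rs A] ax_id[of Rs B]] by simp

lemma deriv_modus_ponens: "deriv Rs [A, Nab (Imp A B)] B"
  using L_imp[of Rs "[A]" A "[]" B "[]" B] ax_id by fastforce

lemma deriv_Imp_One_elim: "deriv Rs [Nab (Imp One A)] A"
  using L_imp[of Rs "[]" One "[]" A "[]" A] ax_one ax_id by fastforce

lemma deriv_Imp_One_Nab_intro: "deriv Rs [A] (Imp One (Nab A))"
  using R_imp[of Rs One "[A]" "Nab A"] deriv_mono[OF ax_id[of Rs "Nab A"], of "[One, Nab A]"] by simp

lemma deriv_Imp_mono: "deriv Rs [B] B' \<Longrightarrow> deriv Rs [Imp A B] (Imp A B')"
  using L_imp[of Rs "[A]" A "[]" B "[]" B'] R_imp[of Rs A "[Imp A B]" B'] ax_id by fastforce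

lemma deriv_Nab_Or: "deriv Rs [Nab (Or A B)] (Or (Nab A) (Nab B))"
proof -
  let ?D = "Or (Nab A) (Nab B)"
  \<comment> \<open>(R\<rightarrow>) moves the \<nabla> off X; after (L\<or>) and (\<nabla>), (L\<rightarrow>) discharges \<nabla>(1 \<rightarrow> D).\<close>
  have "deriv Rs [X] (Imp One ?D)" if "deriv Rs [Nab X] ?D" for X
    using R_imp[of Rs One "[X]" ?D] L_one[of Rs "[]" "[Nab X]" ?D] that by simp
  then have "deriv Rs [Or A B] (Imp One ?D)"
    using deriv_Or_left R_or1 R_or2 ax_id by metis
  then show ?thesis using deriv_trans[OF nab deriv_Imp_One_elim] by blast
qed

lemma deriv_Nab_Bot: "deriv Rs [Nab Bot] Bot"
  using deriv_trans[OF nab[OF deriv_Bot_left] deriv_Imp_One_elim] .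

fun disj_list :: "'a fm list \<Rightarrow> 'a fm" where
  "disj_list [] = Bot"
| "disj_list (A # As) = Or A (disj_list As)"

fun tens_list :: "'a fm list \<Rightarrow> 'a fm" where
  "tens_list [] = One"
| "tens_list (A # As) = Tens A (tens_list As)"

lemma deriv_disj_list_member: "A \<in> set As \<Longrightarrow> deriv Rs [A] (disj_list As)"
  by (induction As) (auto intro: R_or1 R_or2 ax_id)

lemma deriv_disj_list_subset: "set As \<subseteq> set Bs \<Longrightarrow> deriv Rs [disj_list As] (disj_list Bs)"
  by (induction As) (auto intro: deriv_Or_left deriv_Bot_left deriv_disj_list_member)

lemma deriv_disj_list_single: "set As \<subseteq> {B} \<Longrightarrow> deriv Rs [disj_list As] B"
  by (induction As) (auto intro: deriv_Or_left deriv_Bot_left ax_id)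

lemma deriv_Nab_disj_list: "deriv Rs [Nab (disj_list As)] (disj_list (map Nab As))"
proof (induction As)
  case Nil
  then show ?case using deriv_Nab_Bot by simp
next
  case (Cons A As)
  have "deriv Rs [Or (Nab A) (Nab (disj_list As))] (disj_list (map Nab (A # As)))"
    using deriv_Or_left[OF R_or1[OF ax_id] R_or2[OF Cons.IH]] by simp
  then show ?case using deriv_trans[OF deriv_Nab_Or] by simp
qed

lemma deriv_tens_list_right: "deriv Rs As (tens_list As)"
proof (induction As)
  case (Cons A As)
  then show ?case using R_tens[OF ax_id[of Rs A] Cons.IH] by simp
qed (simp add: ax_one)

lemma deriv_tens_list_left:
  assumes "deriv Rs As C"
  shows "deriv Rs [tens_list As] C"
proof -
  have "deriv Rs (\<Gamma> @ As) C \<Longrightarrow> deriv Rs (\<Gamma> @ [tens_list As]) C" for \<Gamma>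
  proof (induction As arbitrary: \<Gamma>)
    case Nil
    then show ?case using L_one[of Rs \<Gamma> "[]" C] by simp
  next
    case (Cons A As)
    then have "deriv Rs (\<Gamma> @ [A, tens_list As] @ []) C" using Cons.IH[of "\<Gamma> @ [A]"] by simp
    then show ?case using L_tens by fastforce
  qed
  from this[of "[]"] assms show ?thesis by simp
qed

lemma deriv_Nab_tens_list: "deriv Rs [Nab (tens_list As)] (tens_list (map Nab As))"
proof (induction As)
  case (Cons A As)
  then show ?case using oplax R_tens[OF ax_id[of Rs "Nab A"] Cons.IH] by simp
qed (simp add: ax_nab_one)

lemma deriv_Nab_context: "SN \<in> Rs \<or> SH \<in> Rs \<Longrightarrow> deriv Rs \<Gamma> C \<Longrightarrow> deriv Rs (map Nab \<Gamma>) (Nab C)"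
  using sch_N[of Rs \<Gamma> C] sch_H[of Rs \<Gamma> "[]" C] by auto

lemma deriv_H_Imp_One:
  assumes "SH \<in> Rs" shows "deriv Rs [Imp (Nab One) (Nab A)] (Nab (Imp One A))"
  using sch_H[OF assms, of "[]" "[(One, A)]" "Imp One A"] ax_id[of Rs "Imp One A"] by simp

lemma deriv_Nab_Imp_One_intro:
  assumes "SH \<in> Rs" shows "deriv Rs [A] (Nab (Imp One A))"
proof -
  have "deriv Rs [A] (Imp (Nab One) (Nab A))"
    using R_imp[of Rs "Nab One" "[A]"] deriv_mono[OF ax_id[of Rs "Nab A"], of "[Nab One, Nab A]"]
    by simp
  moreover have "deriv Rs [Imp (Nab One) (Nab A)] (Nab (Imp One A))"
    by (rule deriv_H_Imp_One[OF assms])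
  ultimately show ?thesis by (rule deriv_trans)
qed

lemma deriv_Imp_One_Nab_elim:
  assumes "SH \<in> Rs" shows "deriv Rs [Imp One (Nab A)] A"
proof -
  have "deriv Rs [Nab One, Nab (Imp One (Nab A))] (Nab A)"
    using L_imp[of Rs "[Nab One]" One "[]" "Nab A" "[]" "Nab A"] ax_id ax_nab_one by fastforce
  then have "deriv Rs [Imp One (Nab A)] (Imp (Nab One) (Nab A))"
    using R_imp[of Rs "Nab One" "[Imp One (Nab A)]"] by simp
  moreover have "deriv Rs [Imp (Nab One) (Nab A)] (Nab (Imp One A))"
    by (rule deriv_H_Imp_One[OF assms])
  ultimately show ?thesis using deriv_trans deriv_Imp_One_elim by blast
qed

definition is_theory :: "scheme set \<Rightarrow> 'a fm set \<Rightarrow> bool" where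
  "is_theory Rs S \<longleftrightarrow> (\<forall>\<Gamma> C. set \<Gamma> \<subseteq> S \<longrightarrow> deriv Rs \<Gamma> C \<longrightarrow> C \<in> S)"

definition prime_theory :: "scheme set \<Rightarrow> 'a fm set \<Rightarrow> bool" where
  "prime_theory Rs S \<longleftrightarrow> is_theory Rs S \<and> Bot \<notin> S \<and> (\<forall>A B. Or A B \<in> S \<longrightarrow> A \<in> S \<or> B \<in> S)"

definition consistent_pair :: "scheme set \<Rightarrow> 'a fm set \<Rightarrow> 'a fm set \<Rightarrow> bool" where
  "consistent_pair Rs G D \<longleftrightarrow>
     (\<nexists>\<Gamma> \<Delta>. set \<Gamma> \<subseteq> G \<and> set \<Delta> \<subseteq> D \<and> deriv Rs \<Gamma> (disj_list \<Delta>))"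

lemma theoryD: "is_theory Rs S \<Longrightarrow> set \<Gamma> \<subseteq> S \<Longrightarrow> deriv Rs \<Gamma> C \<Longrightarrow> C \<in> S"
  unfolding is_theory_def by blast

lemma theory_deriv0: "is_theory Rs S \<Longrightarrow> deriv Rs [] C \<Longrightarrow> C \<in> S"
  by (rule theoryD[of Rs S "[]"]) auto

lemma theory_deriv1: "is_theory Rs S \<Longrightarrow> A \<in> S \<Longrightarrow> deriv Rs [A] C \<Longrightarrow> C \<in> S"
  by (rule theoryD[of Rs S "[A]"]) auto

lemma theory_deriv2: "is_theory Rs S \<Longrightarrow> A \<in> S \<Longrightarrow> B \<in> S \<Longrightarrow> deriv Rs [A, B] C \<Longrightarrow> C \<in> S"
  by (rule theoryD[of Rs S "[A, B]"]) auto

lemma prime_theory_is_theory: "prime_theory Rs S \<Longrightarrow> is_theory Rs S"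
  unfolding prime_theory_def by blast

lemma prime_theory_Bot: "prime_theory Rs S \<Longrightarrow> Bot \<notin> S"
  unfolding prime_theory_def by blast

lemma prime_theory_Or_iff: "prime_theory Rs S \<Longrightarrow> Or A B \<in> S \<longleftrightarrow> A \<in> S \<or> B \<in> S"
  unfolding prime_theory_def
  using theory_deriv1[OF _ _ R_or1[OF ax_id]] theory_deriv1[OF _ _ R_or2[OF ax_id]] by blast

lemma prime_theory_And_iff: "prime_theory Rs S \<Longrightarrow> And A B \<in> S \<longleftrightarrow> A \<in> S \<and> B \<in> S"
  using prime_theory_is_theory theory_deriv1[OF _ _ deriv_And_left1]
    theory_deriv1[OF _ _ deriv_And_left2] theory_deriv2[OF _ _ _ deriv_And_pair] by blast

lemma prime_theory_Tens_iff: "prime_theory Rs S \<Longrightarrow> Tens A B \<in> S \<longleftrightarrow> A \<in> S \<and> B \<in> S"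
  using prime_theory_is_theory theory_deriv1[OF _ _ deriv_Tens_left1]
    theory_deriv1[OF _ _ deriv_Tens_left2] theory_deriv2[OF _ _ _ deriv_Tens_pair] by blast

lemma prime_theory_disj_list: "prime_theory Rs S \<Longrightarrow> disj_list As \<in> S \<Longrightarrow> \<exists>A\<in>set As. A \<in> S"
  by (induction As) (auto simp: prime_theory_Bot prime_theory_Or_iff)

lemma consistent_pairD:
  "consistent_pair Rs G D \<Longrightarrow> set \<Gamma> \<subseteq> G \<Longrightarrow> set \<Delta> \<subseteq> D \<Longrightarrow> \<not> deriv Rs \<Gamma> (disj_list \<Delta>)"
  unfolding consistent_pair_def by blast

lemma consistent_pair_singleton:
  assumes "\<And>\<Gamma>. set \<Gamma> \<subseteq> G \<Longrightarrow> \<not> deriv Rs \<Gamma> B"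
  shows "consistent_pair Rs G {B}"
  unfolding consistent_pair_def
proof clarify
  fix \<Gamma> \<Delta> assume "set \<Gamma> \<subseteq> G" "set \<Delta> \<subseteq> {B}" "deriv Rs \<Gamma> (disj_list \<Delta>)"
  then have "deriv Rs (\<Gamma> @ []) B" using deriv_cut_head deriv_disj_list_single by blast
  with assms \<open>set \<Gamma> \<subseteq> G\<close> show False by simp
qed

lemma consistent_pair_maximal_extension:
  assumes "consistent_pair Rs G D"
  obtains M where "G \<subseteq> M" "consistent_pair Rs M D"
    "\<And>C. C \<notin> M \<Longrightarrow> \<not> consistent_pair Rs (insert C M) D"
proof -
  let ?\<A> = "{M. G \<subseteq> M \<and> consistent_pair Rs M D}"
  have "\<Union>\<C> \<in> ?\<A>" if ne: "\<C> \<noteq> {}" and chain: "subset.chain ?\<A> \<C>" for \<C>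
  proof -
    have sub: "\<C> \<subseteq> ?\<A>" using chain by (simp add: subset.chain_def)
    have "consistent_pair Rs (\<Union>\<C>) D"
      unfolding consistent_pair_def
    proof clarify
      fix \<Gamma> \<Delta> assume \<Gamma>: "set \<Gamma> \<subseteq> \<Union>\<C>" "set \<Delta> \<subseteq> D" "deriv Rs \<Gamma> (disj_list \<Delta>)"
      obtain M where "M \<in> \<C>" "set \<Gamma> \<subseteq> M"
        using finite_subset_Union_chain[OF finite_set \<Gamma>(1) ne chain] .
      with sub \<Gamma>(2,3) show False using consistent_pairD by blast
    qed
    moreover have "G \<subseteq> \<Union>\<C>" using ne sub by blast
    ultimately show ?thesis by simp
  qed
  moreover have "?\<A> \<noteq> {}" using assms by blast
  ultimately have "\<exists>M\<in>?\<A>. \<forall>X\<in>?\<A>. M \<subseteq> X \<longrightarrow> X = M"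
    by (rule subset_Zorn_nonempty[rotated])
  then obtain M where M: "M \<in> ?\<A>" and max: "\<forall>X\<in>?\<A>. M \<subseteq> X \<longrightarrow> X = M" ..
  show thesis
  proof (rule that)
    show "G \<subseteq> M" "consistent_pair Rs M D" using M by simp_all
    fix C assume "C \<notin> M"
    then have "insert C M \<notin> ?\<A>" using max by blast
    then show "\<not> consistent_pair Rs (insert C M) D" using M by blast
  qed
qed

lemma inconsistent_pair_insert:
  assumes "\<not> consistent_pair Rs (insert C M) D"
  obtains \<Gamma> \<Delta> where "set \<Gamma> \<subseteq> M" "set \<Delta> \<subseteq> D" "deriv Rs (C # \<Gamma>) (disj_list \<Delta>)"
proof -
  obtain \<Gamma> \<Delta> where \<Gamma>: "set \<Gamma> \<subseteq> insert C M" "set \<Delta> \<subseteq> D" "deriv Rs \<Gamma> (disj_list \<Delta>)"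
    using assms unfolding consistent_pair_def by blast
  let ?\<Gamma>' = "filter (\<lambda>A. A \<noteq> C) \<Gamma>"
  have "deriv Rs (C # ?\<Gamma>') (disj_list \<Delta>)" by (rule deriv_mono[OF \<Gamma>(3)]) (use \<Gamma>(1) in auto)
  moreover have "set ?\<Gamma>' \<subseteq> M" using \<Gamma>(1) by auto
  ultimately show thesis using that \<Gamma>(2) by blast
qed

lemma consistent_pair_insert_derivable:
  assumes cons: "consistent_pair Rs M D" and "set \<Gamma> \<subseteq> M" "deriv Rs \<Gamma> C"
  shows "consistent_pair Rs (insert C M) D"
proof (rule ccontr)
  assume "\<not> consistent_pair Rs (insert C M) D"
  then obtain \<Gamma>' \<Delta> where "set \<Gamma>' \<subseteq> M" "set \<Delta> \<subseteq> D" "deriv Rs (C # \<Gamma>') (disj_list \<Delta>)"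
    by (rule inconsistent_pair_insert)
  then show False
    using consistent_pairD[OF cons, of "\<Gamma> @ \<Gamma>'"] deriv_cut_head assms(2,3) by fastforce
qed

lemma consistent_pair_insert_Or:
  assumes "consistent_pair Rs (insert (Or A B) M) D"
  shows "consistent_pair Rs (insert A M) D \<or> consistent_pair Rs (insert B M) D"
proof (rule ccontr)
  assume "\<not> ?thesis"
  then obtain \<Gamma>\<^sub>A \<Delta>\<^sub>A \<Gamma>\<^sub>B \<Delta>\<^sub>B where
    "set \<Gamma>\<^sub>A \<subseteq> M" "set \<Delta>\<^sub>A \<subseteq> D" and A: "deriv Rs (A # \<Gamma>\<^sub>A) (disj_list \<Delta>\<^sub>A)" and
    "set \<Gamma>\<^sub>B \<subseteq> M" "set \<Delta>\<^sub>B \<subseteq> D" and B: "deriv Rs (B # \<Gamma>\<^sub>B) (disj_list \<Delta>\<^sub>B)"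
    using inconsistent_pair_insert by metis
  let ?\<Gamma> = "\<Gamma>\<^sub>A @ \<Gamma>\<^sub>B" and ?\<Delta> = "\<Delta>\<^sub>A @ \<Delta>\<^sub>B"
  have widen: "deriv Rs (X # ?\<Gamma>) (disj_list ?\<Delta>)"
    if "deriv Rs (X # \<Gamma>') (disj_list \<Delta>')" "set \<Gamma>' \<subseteq> set ?\<Gamma>" "set \<Delta>' \<subseteq> set ?\<Delta>" for X \<Gamma>' \<Delta>'
    using deriv_cut_head[OF deriv_mono[OF that(1)] deriv_disj_list_subset[OF that(3)], of "X # ?\<Gamma>"]
      that(2) by auto
  have "deriv Rs ([] @ [Or A B] @ ?\<Gamma>) (disj_list ?\<Delta>)"
    using L_or[of Rs "[]" A ?\<Gamma> _ B] widen[OF A] widen[OF B] by simp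
  then show False
    using consistent_pairD[OF assms, of "Or A B # ?\<Gamma>" ?\<Delta>]
      \<open>set \<Gamma>\<^sub>A \<subseteq> M\<close> \<open>set \<Gamma>\<^sub>B \<subseteq> M\<close> \<open>set \<Delta>\<^sub>A \<subseteq> D\<close> \<open>set \<Delta>\<^sub>B \<subseteq> D\<close> by auto
qed

lemma maximal_consistent_pair_prime_theory:
  assumes cons: "consistent_pair Rs M D"
    and max: "\<And>C. C \<notin> M \<Longrightarrow> \<not> consistent_pair Rs (insert C M) D"
  shows "prime_theory Rs M" and "M \<inter> D = {}"
proof -
  have "is_theory Rs M"
    unfolding is_theory_def using consistent_pair_insert_derivable[OF cons] max by blast
  moreover have "Bot \<notin> M"
    using consistent_pairD[OF cons, of "[Bot]" "[]"] deriv_Bot_left by fastforce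
  moreover have "A \<in> M \<or> B \<in> M" if "Or A B \<in> M" for A B
    using consistent_pair_insert_Or[of Rs A B M D] cons that max insert_absorb by metis
  ultimately show "prime_theory Rs M" unfolding prime_theory_def by blast
  show "M \<inter> D = {}"
    using consistent_pairD[OF cons, of "[C]" "[C]" for C] R_or1[OF ax_id] by fastforce
qed

lemma lindenbaum:
  assumes "consistent_pair Rs G D"
  obtains M where "G \<subseteq> M" "prime_theory Rs M" "M \<inter> D = {}"
  using consistent_pair_maximal_extension[OF assms] maximal_consistent_pair_prime_theory by metis

lemma list_in_image:
  assumes "set xs \<subseteq> f ` S"
  obtains ys where "set ys \<subseteq> S" "xs = map f ys"
proof
  show "set (map (inv_into S f) xs) \<subseteq> S" using assms by (auto intro: inv_into_into)
  show "xs = map f (map (inv_into S f) xs)" using assms by (induction xs) (auto simp: f_inv_into_f)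
qed

lemma prime_theory_Imp_witness:
  assumes S: "prime_theory Rs S" and "Imp A B \<notin> S"
  obtains T where "prime_theory Rs T" "Nab ` S \<subseteq> T" "A \<in> T" "B \<notin> T"
proof -
  have "\<not> deriv Rs \<Gamma> B" if "set \<Gamma> \<subseteq> insert A (Nab ` S)" for \<Gamma>
  proof
    assume "deriv Rs \<Gamma> B"
    have "set (filter (\<lambda>C. C \<noteq> A) \<Gamma>) \<subseteq> Nab ` S" using that by auto
    then obtain \<Gamma>' where "set \<Gamma>' \<subseteq> S" "filter (\<lambda>C. C \<noteq> A) \<Gamma> = map Nab \<Gamma>'"
      by (rule list_in_image)
    moreover have "deriv Rs (A # filter (\<lambda>C. C \<noteq> A) \<Gamma>) B"
      by (rule deriv_mono[OF \<open>deriv Rs \<Gamma> B\<close>]) auto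
    ultimately have "deriv Rs \<Gamma>' (Imp A B)" using R_imp by metis
    then have "Imp A B \<in> S" by (rule theoryD[OF prime_theory_is_theory[OF S] \<open>set \<Gamma>' \<subseteq> S\<close>])
    with \<open>Imp A B \<notin> S\<close> show False ..
  qed
  then obtain T where "insert A (Nab ` S) \<subseteq> T" "prime_theory Rs T" "T \<inter> {B} = {}"
    by (rule lindenbaum[OF consistent_pair_singleton])
  then show thesis using that by blast
qed

lemma prime_theory_Nab_witness:
  assumes S: "prime_theory Rs S" and "Nab A \<in> S"
  obtains T where "prime_theory Rs T" "A \<in> T" "Nab ` T \<subseteq> S"
proof -
  have "consistent_pair Rs {A} {B. Nab B \<notin> S}"
    unfolding consistent_pair_def
  proof clarify
    fix \<Gamma> \<Delta> assume "set \<Gamma> \<subseteq> {A}" "set \<Delta> \<subseteq> {B. Nab B \<notin> S}" "deriv Rs \<Gamma> (disj_list \<Delta>)"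
    then have "deriv Rs [A] (disj_list \<Delta>)" using deriv_mono by fastforce
    then have "deriv Rs [Nab A] (disj_list (map Nab \<Delta>))"
      using deriv_trans[OF nab deriv_Nab_disj_list] by blast
    then have "disj_list (map Nab \<Delta>) \<in> S"
      using theory_deriv1[OF prime_theory_is_theory[OF S] \<open>Nab A \<in> S\<close>] by blast
    from prime_theory_disj_list[OF S this] show False using \<open>set \<Delta> \<subseteq> {B. Nab B \<notin> S}\<close> by auto
  qed
  then obtain T where "{A} \<subseteq> T" "prime_theory Rs T" "T \<inter> {B. Nab B \<notin> S} = {}"
    by (rule lindenbaum)
  then show thesis using that by blast
qed

lemma prime_theory_serial_witness:
  assumes "SwF \<in> Rs" and S: "prime_theory Rs S"
  obtains T where "prime_theory Rs T" "Nab ` S \<subseteq> T"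
proof -
  have "consistent_pair Rs (Nab ` S) {}"
    unfolding consistent_pair_def
  proof clarify
    fix \<Gamma> \<Delta> assume "set \<Gamma> \<subseteq> Nab ` S" "set \<Delta> \<subseteq> {}" "deriv Rs \<Gamma> (disj_list \<Delta>)"
    moreover obtain \<Gamma>' where "set \<Gamma>' \<subseteq> S" "\<Gamma> = map Nab \<Gamma>'"
      using list_in_image \<open>set \<Gamma> \<subseteq> Nab ` S\<close> .
    ultimately have "deriv Rs [tens_list (map Nab \<Gamma>')] Bot"
      using deriv_tens_list_left by simp
    then have "deriv Rs [tens_list \<Gamma>'] Bot"
      using sch_wF[OF assms(1)] deriv_trans[OF deriv_Nab_tens_list] by blast
    then have "deriv Rs (\<Gamma>' @ []) Bot" using deriv_cut_head[OF deriv_tens_list_right] by blast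
    then show False
      using theoryD[OF prime_theory_is_theory[OF S]] prime_theory_Bot[OF S] \<open>set \<Gamma>' \<subseteq> S\<close> by fastforce
  qed
  then obtain T where "Nab ` S \<subseteq> T" "prime_theory Rs T" by (rule lindenbaum)
  then show thesis using that by blast
qed

text \<open>The theorem only quantifies over models whose worlds have type \<open>'a fm set set\<close>, so
  the prime theory S is represented by the world {S} and recovered from it as \<Union>{S}.\<close>

definition canon_world :: "scheme set \<Rightarrow> 'a fm set set set" where
  "canon_world Rs = {{S} | S. prime_theory Rs S}"

definition canon_le :: "'a fm set set \<Rightarrow> 'a fm set set \<Rightarrow> bool" where
  "canon_le X Y \<longleftrightarrow> \<Union>X \<subseteq> \<Union>Y"

definition canon_R :: "'a fm set set \<Rightarrow> 'a fm set set \<Rightarrow> bool" where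
  "canon_R X Y \<longleftrightarrow> Nab ` \<Union>X \<subseteq> \<Union>Y"

definition canon_val :: "scheme set \<Rightarrow> 'a \<Rightarrow> 'a fm set set set" where
  "canon_val Rs p = {X \<in> canon_world Rs. Var p \<in> \<Union>X}"

abbreviation canon_forces :: "scheme set \<Rightarrow> 'a fm set set \<Rightarrow> 'a fm \<Rightarrow> bool" where
  "canon_forces Rs \<equiv> forces (canon_world Rs) canon_le canon_R (canon_val Rs)"

lemma canon_world_iff: "X \<in> canon_world Rs \<longleftrightarrow> (\<exists>S. X = {S} \<and> prime_theory Rs S)"
  unfolding canon_world_def by blast

lemma ball_canon_world: "(\<forall>X\<in>canon_world Rs. P X) \<longleftrightarrow> (\<forall>S. prime_theory Rs S \<longrightarrow> P {S})"
  unfolding canon_world_def by blast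

lemma bex_canon_world: "(\<exists>X\<in>canon_world Rs. P X) \<longleftrightarrow> (\<exists>S. prime_theory Rs S \<and> P {S})"
  unfolding canon_world_def by blast

lemma canon_forces_Imp_iff:
  assumes S: "prime_theory Rs S"
    and IH_A: "\<And>T. prime_theory Rs T \<Longrightarrow> canon_forces Rs {T} A \<longleftrightarrow> A \<in> T"
    and IH_B: "\<And>T. prime_theory Rs T \<Longrightarrow> canon_forces Rs {T} B \<longleftrightarrow> B \<in> T"
  shows "canon_forces Rs {S} (Imp A B) \<longleftrightarrow> Imp A B \<in> S"
proof
  assume forced: "canon_forces Rs {S} (Imp A B)"
  show "Imp A B \<in> S"
  proof (rule ccontr)
    assume "Imp A B \<notin> S"
    then obtain T where T: "prime_theory Rs T" "Nab ` S \<subseteq> T" "A \<in> T" "B \<notin> T"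
      using prime_theory_Imp_witness[OF S] by blast
    have "{T} \<in> canon_world Rs" "canon_R {S} {T}"
      using T(1,2) by (auto simp: canon_world_iff canon_R_def)
    with forced have "canon_forces Rs {T} B" using IH_A[OF T(1)] T(3) by auto
    then show False using IH_B[OF T(1)] T(4) by simp
  qed
next
  assume imp: "Imp A B \<in> S"
  show "canon_forces Rs {S} (Imp A B)"
    unfolding forces.simps ball_canon_world
  proof (intro allI impI)
    fix T assume T: "prime_theory Rs T" "canon_R {S} {T}" "canon_forces Rs {T} A"
    then have "A \<in> T" "Nab (Imp A B) \<in> T" using imp IH_A by (auto simp: canon_R_def)
    then have "B \<in> T"
      using theory_deriv2[OF prime_theory_is_theory[OF T(1)] _ _ deriv_modus_ponens] by blast
    then show "canon_forces Rs {T} B" using IH_B[OF T(1)] by simp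
  qed
qed

lemma canon_forces_Nab_iff:
  assumes S: "prime_theory Rs S"
    and IH: "\<And>T. prime_theory Rs T \<Longrightarrow> canon_forces Rs {T} A \<longleftrightarrow> A \<in> T"
  shows "canon_forces Rs {S} (Nab A) \<longleftrightarrow> Nab A \<in> S"
proof
  assume "canon_forces Rs {S} (Nab A)"
  then obtain T where "prime_theory Rs T" "canon_R {T} {S}" "canon_forces Rs {T} A"
    unfolding forces.simps bex_canon_world by blast
  then show "Nab A \<in> S" using IH by (auto simp: canon_R_def)
next
  assume "Nab A \<in> S"
  then obtain T where T: "prime_theory Rs T" "A \<in> T" "Nab ` T \<subseteq> S"
    using prime_theory_Nab_witness[OF S] by blast
  have "{T} \<in> canon_world Rs" "canon_R {T} {S}"
    using T by (auto simp: canon_world_iff canon_R_def)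
  moreover have "canon_forces Rs {T} A" using IH[OF T(1)] T(2) by simp
  ultimately show "canon_forces Rs {S} (Nab A)" by auto
qed

lemma canon_forces_iff: "prime_theory Rs S \<Longrightarrow> canon_forces Rs {S} A \<longleftrightarrow> A \<in> S"
proof (induction A arbitrary: S)
  case (Var p)
  then show ?case by (auto simp: canon_val_def canon_world_iff)
next
  case One
  then show ?case using theory_deriv0[OF prime_theory_is_theory ax_one] by simp
next
  case Top
  then show ?case using theory_deriv0[OF prime_theory_is_theory ax_top] by simp
next
  case Bot
  then show ?case using prime_theory_Bot by simp
next
  case (And A B)
  then show ?case using prime_theory_And_iff[OF And.prems] by simp
next
  case (Or A B)
  then show ?case using prime_theory_Or_iff[OF Or.prems] by simp
next
  case (Tens A B)
  then show ?case using prime_theory_Tens_iff[OF Tens.prems] by simp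
next
  case (Imp A B)
  show ?case by (rule canon_forces_Imp_iff[OF Imp.prems Imp.IH])
next
  case (Nab A)
  show ?case by (rule canon_forces_Nab_iff[OF Nab.prems Nab.IH])
qed

definition nab_pre :: "'a fm set \<Rightarrow> 'a fm set" where
  "nab_pre S = {A. Nab A \<in> S}"

definition canon_pi :: "'a fm set set \<Rightarrow> 'a fm set set" where
  "canon_pi X = {nab_pre (\<Union>X)}"

lemma prime_theory_nab_pre:
  assumes "SN \<in> Rs \<or> SH \<in> Rs" and S: "prime_theory Rs S"
  shows "prime_theory Rs (nab_pre S)"
proof -
  have thS: "is_theory Rs S" using S by (rule prime_theory_is_theory)
  have "C \<in> nab_pre S" if "set \<Gamma> \<subseteq> nab_pre S" "deriv Rs \<Gamma> C" for \<Gamma> C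
  proof -
    have "set (map Nab \<Gamma>) \<subseteq> S" using that(1) by (auto simp: nab_pre_def)
    from theoryD[OF thS this deriv_Nab_context[OF assms(1) that(2)]] show ?thesis
      by (simp add: nab_pre_def)
  qed
  moreover have "Bot \<notin> nab_pre S"
    using theory_deriv1[OF thS _ deriv_Nab_Bot] prime_theory_Bot[OF S] by (auto simp: nab_pre_def)
  moreover have "A \<in> nab_pre S \<or> B \<in> nab_pre S" if "Or A B \<in> nab_pre S" for A B
    using theory_deriv1[OF thS _ deriv_Nab_Or] that prime_theory_Or_iff[OF S]
    by (auto simp: nab_pre_def)
  ultimately show ?thesis unfolding prime_theory_def is_theory_def by blast
qed

lemma canon_has_pi:
  assumes "SN \<in> Rs \<or> SH \<in> Rs"
  shows "has_pi (canon_world Rs) canon_le canon_R canon_pi"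
  unfolding has_pi_def ball_canon_world
  using prime_theory_nab_pre[OF assms]
  by (auto simp: canon_world_iff canon_le_def canon_R_def canon_pi_def nab_pre_def)

lemma nab_pre_reflects_subset:
  assumes "SH \<in> Rs" "is_theory Rs S" "is_theory Rs T" "nab_pre S \<subseteq> nab_pre T"
  shows "S \<subseteq> T"
proof
  fix A assume "A \<in> S"
  then have "Nab (Imp One A) \<in> S"
    using theory_deriv1[OF assms(2) _ deriv_Nab_Imp_One_intro[OF assms(1)]] by blast
  then have "Nab (Imp One A) \<in> T" using assms(4) by (auto simp: nab_pre_def)
  then show "A \<in> T" using theory_deriv1[OF assms(3) _ deriv_Imp_One_elim] by blast
qed

definition one_imp_pre :: "'a fm set \<Rightarrow> 'a fm set" where
  "one_imp_pre F = {A. Imp One A \<in> F}"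

lemma nab_pre_one_imp_pre:
  assumes "SH \<in> Rs" "is_theory Rs F"
  shows "nab_pre (one_imp_pre F) = F"
proof (intro set_eqI iffI)
  fix B assume "B \<in> nab_pre (one_imp_pre F)"
  then have "Imp One (Nab B) \<in> F" by (simp add: nab_pre_def one_imp_pre_def)
  then show "B \<in> F" by (rule theory_deriv1[OF assms(2) _ deriv_Imp_One_Nab_elim[OF assms(1)]])
next
  fix B assume "B \<in> F"
  then have "Imp One (Nab B) \<in> F" by (rule theory_deriv1[OF assms(2) _ deriv_Imp_One_Nab_intro])
  then show "B \<in> nab_pre (one_imp_pre F)" by (simp add: nab_pre_def one_imp_pre_def)
qed

lemma is_theory_one_imp_pre:
  assumes F: "is_theory Rs F"
  shows "is_theory Rs (one_imp_pre F)"
  unfolding is_theory_def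
proof clarify
  fix \<Gamma> C assume \<Gamma>: "set \<Gamma> \<subseteq> one_imp_pre F" "deriv Rs \<Gamma> C"
  have "deriv Rs (map Nab (map (Imp One) \<Gamma>)) C"
    using deriv_cut_map[where f = "\<lambda>A. Nab (Imp One A)", OF deriv_Imp_One_elim \<Gamma>(2)]
    by (simp add: comp_def)
  then have "deriv Rs (One # map Nab (map (Imp One) \<Gamma>)) C"
    using L_one[of Rs "[]"] by simp
  then have "deriv Rs (map (Imp One) \<Gamma>) (Imp One C)" by (rule R_imp)
  moreover have "set (map (Imp One) \<Gamma>) \<subseteq> F" using \<Gamma>(1) by (auto simp: one_imp_pre_def)
  ultimately have "Imp One C \<in> F" using theoryD[OF F] by blast
  then show "C \<in> one_imp_pre F" by (simp add: one_imp_pre_def)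
qed

lemma prime_theory_one_imp_pre:
  assumes H: "SH \<in> Rs" and F: "prime_theory Rs F"
  shows "prime_theory Rs (one_imp_pre F)"
proof -
  have thF: "is_theory Rs F" using F by (rule prime_theory_is_theory)
  moreover have "Bot \<notin> one_imp_pre F"
  proof
    assume "Bot \<in> one_imp_pre F"
    then have "Imp One (Nab Bot) \<in> F"
      using theory_deriv1[OF thF _ deriv_Imp_mono[OF deriv_Bot_left]]
      unfolding one_imp_pre_def by blast
    then have "Bot \<in> F" by (rule theory_deriv1[OF thF _ deriv_Imp_One_Nab_elim[OF H]])
    with prime_theory_Bot[OF F] show False ..
  qed
  moreover have "A \<in> one_imp_pre F \<or> B \<in> one_imp_pre F" if "Or A B \<in> one_imp_pre F" for A B
  proof -
    let ?D = "Or (Imp One A) (Imp One B)"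
    have "deriv Rs [A] (Nab ?D)"
      by (rule deriv_trans[OF deriv_Nab_Imp_One_intro[OF H] nab[OF R_or1[OF ax_id]]])
    moreover have "deriv Rs [B] (Nab ?D)"
      by (rule deriv_trans[OF deriv_Nab_Imp_One_intro[OF H] nab[OF R_or2[OF ax_id]]])
    ultimately have "deriv Rs [Or A B] (Nab ?D)" by (rule deriv_Or_left)
    then have "deriv Rs [Imp One (Or A B)] ?D"
      by (rule deriv_trans[OF deriv_Imp_mono deriv_Imp_One_Nab_elim[OF H]])
    moreover have "Imp One (Or A B) \<in> F" using that by (simp add: one_imp_pre_def)
    ultimately have "?D \<in> F" using theory_deriv1[OF thF] by blast
    then show ?thesis using prime_theory_Or_iff[OF F] by (simp add: one_imp_pre_def)
  qed
  ultimately show ?thesis using is_theory_one_imp_pre[OF thF] unfolding prime_theory_def by blast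
qed

lemma canon_pi_order_iso:
  assumes "SH \<in> Rs" "X \<in> canon_world Rs" "Y \<in> canon_world Rs"
  shows "canon_le X Y \<longleftrightarrow> canon_le (canon_pi X) (canon_pi Y)"
proof -
  obtain S T where "X = {S}" "Y = {T}" "prime_theory Rs S" "prime_theory Rs T"
    using assms(2,3) by (auto simp: canon_world_iff)
  then show ?thesis
    using nab_pre_reflects_subset[OF assms(1) prime_theory_is_theory prime_theory_is_theory]
    by (auto simp: canon_le_def canon_pi_def nab_pre_def)
qed

lemma canon_pi_bij:
  assumes H: "SH \<in> Rs"
  shows "bij_betw canon_pi (canon_world Rs :: 'a fm set set set) (canon_world Rs)"
proof -
  let ?W = "canon_world Rs :: 'a fm set set set"
  have "inj_on canon_pi ?W"
  proof (rule inj_onI)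
    fix X Y assume XY: "X \<in> ?W" "Y \<in> ?W" "canon_pi X = canon_pi Y"
    then have "canon_le X Y" "canon_le Y X"
      using canon_pi_order_iso[OF H XY(1,2)] canon_pi_order_iso[OF H XY(2,1)]
      by (simp_all add: canon_le_def)
    with XY(1,2) show "X = Y" by (auto simp: canon_world_iff canon_le_def)
  qed
  moreover have "?W \<subseteq> canon_pi ` ?W"
  proof
    fix X assume "X \<in> ?W"
    then obtain F where F: "X = {F}" "prime_theory Rs F" by (auto simp: canon_world_iff)
    have "canon_pi {one_imp_pre F} = X"
      using nab_pre_one_imp_pre[OF H prime_theory_is_theory[OF F(2)]] F(1)
      by (simp add: canon_pi_def)
    moreover have "{one_imp_pre F} \<in> ?W"
      using prime_theory_one_imp_pre[OF H F(2)] by (auto simp: canon_world_iff)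
    ultimately show "X \<in> canon_pi ` ?W" by blast
  qed
  moreover have "canon_pi ` ?W \<subseteq> ?W"
    using canon_has_pi[of Rs] H unfolding has_pi_def by blast
  ultimately show ?thesis by (simp add: bij_betw_def subset_antisym)
qed

lemma canon_kripke_model: "kripke_model (canon_world Rs) canon_le canon_R (canon_val Rs)"
  unfolding kripke_model_def ball_canon_world
  by (auto simp: canon_le_def canon_R_def canon_val_def canon_world_iff)

lemma canon_R_le_canon_le:
  assumes P: "SP \<in> Rs" and "X \<in> canon_world Rs" "Y \<in> canon_world Rs" "canon_R X Y"
  shows "canon_le X Y"
proof -
  obtain S T where ST: "X = {S}" "Y = {T}" "prime_theory Rs T" "Nab ` S \<subseteq> T"
    using assms(2-4) by (auto simp: canon_world_iff canon_R_def)
  have "A \<in> T" if "A \<in> S" for A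
    using theory_deriv1[OF prime_theory_is_theory[OF ST(3)] _ sch_P[OF P ax_id]] ST(4) that by blast
  then show ?thesis using ST(1,2) by (auto simp: canon_le_def)
qed

lemma canon_R_refl:
  assumes F: "SF \<in> Rs" and "X \<in> canon_world Rs"
  shows "canon_R X X"
proof -
  obtain S where S: "X = {S}" "prime_theory Rs S" using assms(2) by (auto simp: canon_world_iff)
  have "Nab A \<in> S" if "A \<in> S" for A
    using theory_deriv1[OF prime_theory_is_theory[OF S(2)] that sch_F[OF F ax_id]] .
  then show ?thesis using S(1) by (auto simp: canon_R_def)
qed

lemma canon_R_serial:
  assumes wF: "SwF \<in> Rs" and "X \<in> canon_world Rs"
  shows "\<exists>Y\<in>canon_world Rs. canon_R X Y"
proof -
  obtain S where S: "X = {S}" "prime_theory Rs S" using assms(2) by (auto simp: canon_world_iff)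
  obtain T where "prime_theory Rs T" "Nab ` S \<subseteq> T"
    using prime_theory_serial_witness[OF wF S(2)] .
  then have "{T} \<in> canon_world Rs" "canon_R X {T}"
    using S(1) by (auto simp: canon_world_iff canon_R_def)
  then show ?thesis ..
qed

lemma canon_K_model: "K_model Rs (canon_world Rs) canon_le canon_R (canon_val Rs)"
  unfolding K_model_def
  by (auto intro!: canon_kripke_model exI[of _ canon_pi] canon_has_pi canon_pi_bij
      intro: canon_R_le_canon_le canon_R_refl canon_R_serial simp: canon_pi_order_iso)

theorem theorem8p8:
  fixes Rs :: "scheme set" and \<Gamma> :: "'a fm list" and A :: "'a fm"
  assumes "\<forall>(W :: 'a fm set set set) le R V.
             K_model Rs W le R V \<longrightarrow> valid_in W le R V \<Gamma> A"
  shows "deriv Rs \<Gamma> A"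
proof (rule ccontr)
  assume "\<not> deriv Rs \<Gamma> A"
  then have "consistent_pair Rs (set \<Gamma>) {A}"
    by (intro consistent_pair_singleton) (use deriv_mono in blast)
  then obtain M where M: "set \<Gamma> \<subseteq> M" "prime_theory Rs M" "M \<inter> {A} = {}"
    by (rule lindenbaum)
  have "valid_in (canon_world Rs) canon_le canon_R (canon_val Rs) \<Gamma> A"
    using assms canon_K_model by blast
  moreover have "{M} \<in> canon_world Rs" using M(2) by (auto simp: canon_world_iff)
  ultimately have "canon_forces Rs {M} A"
    using M(1) canon_forces_iff[OF M(2)] unfolding valid_in_def by blast
  then show False using M(3) canon_forces_iff[OF M(2)] by simp
qed

end
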